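(* Let $\sigma:\mathbb R^n\to\mathbb R^{n\times m}$ be of class $C^2$ and let $u:\mathbb R^n\to\mathbb R$ be a function of class $C^3$. Let $\bar x\in\mathbb R^n$ be a point such that $\nabla u\,\sigma(\bar x)=0$ and $\nabla u(\bar x)\neq 0$. Assume that either $S(\bar x)$ is not symmetric, or, if it is symmetric, it has at least one negative eigenvalue. Then there are $a_1,a_2\in B_1(0)$ such that $$K(\bar x)\begin{pmatrix}a_1\\ a_2\end{pmatrix}\cdot\begin{pmatrix}a_1\\ a_2\end{pmatrix}<0.$$ In particular $K(\bar x)$ has a negative eigenvalue and the target $\{x:u(x)\leq u(\bar x)\}$ is small time locally attainable (STLA) by the system $\dot x_t=\sigma(x_t)a_t$ at $\bar x$.
   Context: Consider the symmetric control system $\dot x_t=\sigma(x_t)a_t$, $x_0\in\mathbb R^n$, with piecewise continuous controls $a_\cdot:[0,+\infty)\to B_1(0)=\{a\in\mathbb R^m:|a|\le 1\}$; the columns of $\sigma$ are vector fields $\sigma_i$, $i=1,\dots,m$. Define the matrix-valued function $S:\mathbb R^n\to\mathbb R^{m\times m}$ by $S(x)={}^t\sigma(x)\,{}^tD(\nabla u\,\sigma)(x)$ (so that $S(x)a_1\cdot a_2=\nabla(\nabla u\cdot\sigma a_1)\cdot\sigma a_2(x)$), let $S^*$ be its symmetric part, and define the symmetric matrix $K:\mathbb R^n\to\mathbb R^{2m\times 2m}$, $K(x)=\begin{pmatrix}S^*(x)&{}^tS(x)\\ S(x)&S^*(x)\end{pmatrix}$. Here ${}^tA$ denotes the transpose,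 $D$ the Jacobian, and "STLA at $\bar x$" means that for every small $t>0$ there is $\delta>0$ such that from every point within distance $\delta$ of $\bar x$ the target can be reached in time less than $t$. *)

theory Defs
  imports "HOL-Analysis.Analysis"
begin

fun Ck :: "nat \<Rightarrow> ('a::real_normed_vector \<Rightarrow> 'b::real_normed_vector) \<Rightarrow> bool" where
  "Ck 0 f = continuous_on UNIV f"
| "Ck (Suc k) f = ((\<forall>x. f differentiable (at x)) \<and>
      (\<forall>v. Ck k (\<lambda>x. frechet_derivative f (at x) v)))"

definition grad :: "(real^'n \<Rightarrow> real) \<Rightarrow> real^'n \<Rightarrow> real^'n" where
  "grad f x = (\<chi> i. frechet_derivative f (at x) (axis i 1))"

definition gradu_sigma :: "(real^'n \<Rightarrow> real) \<Rightarrow> (real^'n \<Rightarrow> real^'m^'n) \<Rightarrow> real^'n \<Rightarrow> real^'m" where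
  "gradu_sigma u \<sigma> x = grad u x v* \<sigma> x"

text \<open>S(x) = (transpose sigma(x)) (transpose D(\<nabla>u \<sigma>)(x)), an m x m matrix:
  S(x)_{ij} = \<nabla>((\<nabla>u \<sigma>)_j)(x) . \<sigma>_i(x).\<close>
definition Smat :: "(real^'n \<Rightarrow> real) \<Rightarrow> (real^'n \<Rightarrow> real^'m^'n) \<Rightarrow> real^'n \<Rightarrow> real^'m^'m" where
  "Smat u \<sigma> x = (\<chi> i j. grad (\<lambda>y. gradu_sigma u \<sigma> y $ j) x \<bullet> column i (\<sigma> x))"

definition sym_part :: "real^'m^'m \<Rightarrow> real^'m^'m" where
  "sym_part A = (1/2) *\<^sub>R (A + transpose A)"

text \<open>The 2m x 2m block matrix K = [[S*, S^T],[S, S*]], indexed by 'm + 'm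
  (Inl = first block, Inr = second block).\<close>
definition Kmat :: "(real^'n \<Rightarrow> real) \<Rightarrow> (real^'n \<Rightarrow> real^'m^'n) \<Rightarrow> real^'n \<Rightarrow> real^('m + 'm)^('m + 'm)" where
  "Kmat u \<sigma> x = (let S = Smat u \<sigma> x; Ss = sym_part S in
     (\<chi> p q. (case (p, q) of
        (Inl i, Inl j) \<Rightarrow> Ss $ i $ j
      | (Inl i, Inr j) \<Rightarrow> transpose S $ i $ j
      | (Inr i, Inl j) \<Rightarrow> S $ i $ j
      | (Inr i, Inr j) \<Rightarrow> Ss $ i $ j)))"

definition stack :: "real^'m \<Rightarrow> real^'m \<Rightarrow> real^('m + 'm)" where
  "stack a1 a2 = (\<chi> k. (case k of Inl i \<Rightarrow> a1 $ i | Inr i \<Rightarrow> a2 $ i))"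

definition has_neg_eigenvalue :: "real^'k^'k \<Rightarrow> bool" where
  "has_neg_eigenvalue A \<longleftrightarrow> (\<exists>l::real. l < 0 \<and> (\<exists>v. v \<noteq> 0 \<and> A *v v = l *\<^sub>R v))"

definition piecewise_continuous_nonneg :: "(real \<Rightarrow> 'a::real_normed_vector) \<Rightarrow> bool" where
  "piecewise_continuous_nonneg a \<longleftrightarrow> (\<forall>T\<ge>0. \<exists>D. finite D \<and> D \<subseteq> {0..T} \<and>
      continuous_on ({0..T} - D) a \<and>
      (\<forall>d\<in>D. (\<exists>l. (a \<longlongrightarrow> l) (at d within ({0..T} \<inter> {..<d}))) \<and>
              (\<exists>l. (a \<longlongrightarrow> l) (at d within ({0..T} \<inter> {d<..})))))"

definition admissible_control :: "(real \<Rightarrow> real^'m) \<Rightarrow> bool" where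
  "admissible_control a \<longleftrightarrow> piecewise_continuous_nonneg a \<and> (\<forall>t\<ge>0. a t \<in> cball 0 1)"

definition trajectory :: "(real^'n \<Rightarrow> real^'m^'n) \<Rightarrow> (real \<Rightarrow> real^'m) \<Rightarrow> real^'n \<Rightarrow> real \<Rightarrow> (real \<Rightarrow> real^'n) \<Rightarrow> bool" where
  "trajectory \<sigma> a y T x \<longleftrightarrow> x 0 = y \<and> continuous_on {0..T} x \<and>
     (\<forall>s\<in>{0..T}. ((\<lambda>r. \<sigma> (x r) *v a r) has_integral (x s - y)) {0..s})"

definition STLA :: "(real^'n \<Rightarrow> real^'m^'n) \<Rightarrow> (real^'n) set \<Rightarrow> real^'n \<Rightarrow> bool" where
  "STLA \<sigma> target xbar \<longleftrightarrow> (\<forall>t>0. \<exists>\<delta>>0. \<forall>y. dist y xbar < \<delta> \<longrightarrow>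
     (\<exists>a x \<tau>. admissible_control a \<and> 0 \<le> \<tau> \<and> \<tau> < t \<and> trajectory \<sigma> a y \<tau> x \<and> x \<tau> \<in> target))"

end

theory Submission
  imports Defs
begin

text \<open>
  The quadratic form of \<open>K\<close> at \<open>(a\<^sub>1; a\<^sub>2)\<close> is
  \<open>Q(a\<^sub>1, a\<^sub>2) = S a\<^sub>1\<cdot>a\<^sub>1 + S a\<^sub>2\<cdot>a\<^sub>2 + 2 S a\<^sub>1\<cdot>a\<^sub>2\<close> (\<open>pair_quadratic_form\<close>). If \<open>S\<close>
  has a negative eigenvalue, a unit eigenvector taken twice makes \<open>Q\<close> negative; if \<open>S\<close> is not
  symmetric, an asymmetric pair of entries \<open>S\<^sub>p\<^sub>q \<noteq> S\<^sub>q\<^sub>p\<close> does so for suitable multiples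
  of \<open>e\<^sub>p\<close> and \<open>e\<^sub>q\<close>. Since \<open>K\<close> is symmetric, minimising its Rayleigh quotient then yields a
  negative eigenvalue.

  For attainability, follow the constant control \<open>a\<^sub>2\<close> for a time \<open>h\<close> and then \<open>a\<^sub>1\<close> for
  a time \<open>h\<close>. Along an arc with constant control \<open>a\<close> one has \<open>(u \<circ> x)' = \<nabla>u \<sigma>(x) a\<close> and
  \<open>(\<nabla>u \<sigma>(x) b)' = S(x) b \<cdot> a\<close>, so a second-order expansion gives, for every \<open>\<epsilon> > 0\<close> and
  uniformly for \<open>y\<close> in a fixed ball around \<open>xbar\<close>,
  \<open>u(x(2h)) \<le> u(y) + h \<nabla>u \<sigma>(y)(a\<^sub>1 + a\<^sub>2) + h\<^sup>2 (Q(a\<^sub>1, a\<^sub>2)/2 + \<epsilon>)\<close>.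
  Replacing both controls by their negatives leaves the second-order term unchanged, so the
  first-order term can be made nonpositive; for \<open>y\<close> close enough to \<open>xbar\<close> (depending on \<open>h\<close>)
  this gives \<open>u(x(2h)) < u(xbar)\<close>.
\<close>

section \<open>Quadratic forms of \<open>S\<close> and \<open>K\<close>\<close>

definition pair_quadratic_form :: "real^'m^'m \<Rightarrow> real^'m \<Rightarrow> real^'m \<Rightarrow> real" where
  "pair_quadratic_form S a1 a2 = (S *v a1) \<bullet> a1 + (S *v a2) \<bullet> a2 + 2 * ((S *v a1) \<bullet> a2)"

lemma inner_vector_matrix_mult: "(a v* S) \<bullet> b = (S *v b) \<bullet> (a :: real^'n)"
  by (metis dot_lmul_matrix inner_commute)

lemma inner_stack: "stack x y \<bullet> stack a b = x \<bullet> a + y \<bullet> b"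
  unfolding stack_def inner_vec_def
  by (subst UNIV_Plus_UNIV[symmetric], subst sum.Plus) (auto simp: comp_def)

lemma Kmat_mult_stack:
  "Kmat u \<sigma> x *v stack a1 a2 =
     stack (sym_part (Smat u \<sigma> x) *v a1 + transpose (Smat u \<sigma> x) *v a2)
           (Smat u \<sigma> x *v a1 + sym_part (Smat u \<sigma> x) *v a2)"
  unfolding Kmat_def stack_def matrix_vector_mult_def Let_def
  by (subst UNIV_Plus_UNIV[symmetric], subst sum.Plus)
     (auto simp: vec_eq_iff comp_def split: sum.split)

lemma Kmat_quadratic_form:
  "(Kmat u \<sigma> x *v stack a1 a2) \<bullet> stack a1 a2 = pair_quadratic_form (Smat u \<sigma> x) a1 a2"
  unfolding Kmat_mult_stack inner_stack pair_quadratic_form_def sym_part_def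
  by (simp add: inner_vector_matrix_mult scaleR_matrix_vector_assoc[symmetric] algebra_simps)

lemma transpose_Kmat: "transpose (Kmat u \<sigma> x) = Kmat u \<sigma> x"
  unfolding Kmat_def transpose_def Let_def sym_part_def
  by (simp add: vec_eq_iff split: sum.splits)

lemma linear_coeff_zero_if_quadratic_nonneg:
  fixes c d :: real
  assumes "\<And>t. 0 \<le> 2 * t * c + t^2 * d"
  shows "c = 0"
proof (rule ccontr)
  assume "c \<noteq> 0"
  define e where "e = \<bar>d\<bar> + 1"
  have e: "e > 0" "d \<le> e" unfolding e_def by auto
  define t where "t = - c / (2 * e)"
  have "2 * t * c + t^2 * d \<le> 2 * t * c + t^2 * e"
    using mult_left_mono[of d e "t^2"] e by simp
  also have "\<dots> = - (3 * c^2) / (4 * e)"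
    using e unfolding t_def by (simp add: field_simps power2_eq_square)
  also have "\<dots> < 0" using \<open>c \<noteq> 0\<close> e by (simp add: divide_neg_pos)
  finally show False using assms[of t] by simp
qed

lemma quadratic_form_attains_min_on_sphere:
  fixes K :: "real^'k^'k"
  obtains w0 where "norm w0 = 1" and "\<And>w. ((K *v w0) \<bullet> w0) * (norm w)^2 \<le> (K *v w) \<bullet> w"
proof -
  define f where "f = (\<lambda>w. (K *v w) \<bullet> w)"
  have "continuous_on (sphere 0 1) f"
    unfolding f_def
    by (intro continuous_intros linear_continuous_on matrix_vector_mul_bounded_linear)
  moreover have "axis undefined 1 \<in> sphere (0::real^'k) 1" by simp
  ultimately obtain w0 where w0: "w0 \<in> sphere 0 1" and min: "\<And>w. w \<in> sphere 0 1 \<Longrightarrow> f w0 \<le> f w"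
    using continuous_attains_inf[OF compact_sphere] by (metis empty_iff)
  have "f w0 * (norm w)^2 \<le> f w" for w
  proof (cases "w = 0")
    case False
    have "f w0 \<le> f (w /\<^sub>R norm w)" using False by (intro min) simp
    also have "\<dots> = f w / (norm w)^2"
      unfolding f_def by (simp add: matrix_vector_mult_scaleR power2_eq_square divide_inverse)
    finally show ?thesis using False by (simp add: field_simps)
  qed (simp add: f_def)
  with w0 that show ?thesis unfolding f_def by simp
qed

text \<open>The first variation of the Rayleigh quotient at a minimiser vanishes.\<close>
lemma symmetric_matrix_min_eigenvector:
  fixes K :: "real^'k^'k"
  assumes symK: "transpose K = K" and unit: "norm w0 = 1"
    and min: "\<And>w. ((K *v w0) \<bullet> w0) * (norm w)^2 \<le> (K *v w) \<bullet> w"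
  shows "K *v w0 = ((K *v w0) \<bullet> w0) *\<^sub>R w0"
proof -
  define l where "l = (K *v w0) \<bullet> w0"
  define z where "z = K *v w0 - l *\<^sub>R w0"
  have "0 \<le> 2 * t * (z \<bullet> z) + t^2 * ((K *v z) \<bullet> z - l * (norm z)^2)" for t
  proof -
    have Kz: "(K *v z) \<bullet> w0 = (K *v w0) \<bullet> z"
      using inner_vector_matrix_mult[of w0 K z] symK by (metis transpose_matrix_vector)
    have "w0 \<bullet> w0 = 1" using unit by (simp add: dot_square_norm)
    then have "l * (norm (w0 + t *\<^sub>R z))^2 \<le> (K *v (w0 + t *\<^sub>R z)) \<bullet> (w0 + t *\<^sub>R z)"
      using min unfolding l_def by blast
    then show ?thesis
      unfolding z_def power2_norm_eq_inner
      using Kz[unfolded z_def] \<open>w0 \<bullet> w0 = 1\<close>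
      by (simp add: algebra_simps inner_commute power2_eq_square l_def)
  qed
  then have "z \<bullet> z = 0" by (rule linear_coeff_zero_if_quadratic_nonneg)
  then show ?thesis unfolding z_def l_def by simp
qed

lemma has_neg_eigenvalue_if_quadratic_form_neg:
  fixes K :: "real^'k^'k"
  assumes "transpose K = K" and "(K *v v) \<bullet> v < 0"
  shows "has_neg_eigenvalue K"
proof -
  obtain w0 where unit: "norm w0 = 1" and min: "\<And>w. ((K *v w0) \<bullet> w0) * (norm w)^2 \<le> (K *v w) \<bullet> w"
    using quadratic_form_attains_min_on_sphere[of K] by blast
  have "((K *v w0) \<bullet> w0) * (norm v)^2 < 0" using min[of v] assms(2) by linarith
  then have "(K *v w0) \<bullet> w0 < 0" by (simp add: mult_less_0_iff)
  moreover have "w0 \<noteq> 0" using unit by auto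
  ultimately show ?thesis
    unfolding has_neg_eigenvalue_def
    using symmetric_matrix_min_eigenvector[OF assms(1) unit min] by blast
qed

lemma pair_quadratic_form_neg_if_neg_eigenvalue:
  assumes "has_neg_eigenvalue S"
  shows "\<exists>a1 a2. a1 \<in> cball 0 1 \<and> a2 \<in> cball 0 1 \<and> pair_quadratic_form S a1 a2 < 0"
proof -
  obtain l v where l: "l < 0" "v \<noteq> 0" "S *v v = l *\<^sub>R v"
    using assms unfolding has_neg_eigenvalue_def by blast
  define w where "w = v /\<^sub>R norm v"
  have "pair_quadratic_form S w w = 4 * l"
    using l unfolding pair_quadratic_form_def w_def
    by (simp add: matrix_vector_mult_scaleR dot_square_norm field_simps power2_eq_square)
  moreover have "w \<in> cball 0 1" unfolding w_def using l by simp
  ultimately show ?thesis using l by (intro exI[of _ w]) auto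
qed

lemma inner_matrix_vector_mult_axis: "((S::real^'m^'m) *v axis j 1) \<bullet> axis i 1 = S$i$j"
  by (simp add: matrix_vector_mult_basis inner_axis column_def)

lemma pair_quadratic_form_shift:
  "pair_quadratic_form S a (w - a) = (S *v w) \<bullet> w + (S *v a) \<bullet> w - (S *v w) \<bullet> a"
  unfolding pair_quadratic_form_def
  by (simp add: matrix_vector_mult_diff_distrib inner_diff_left inner_diff_right
      inner_commute[of a "S *v a"] inner_commute[of w "S *v a"])

text \<open>With \<open>a\<^sub>1 = (c/2) e\<^sub>q\<close> and \<open>a\<^sub>2 = (s/2) e\<^sub>p - a\<^sub>1\<close> the form equals
  \<open>s (s S\<^sub>p\<^sub>p + c (S\<^sub>p\<^sub>q - S\<^sub>q\<^sub>p)) / 4\<close>, which is negative for the right sign \<open>c\<close>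
  and small \<open>s > 0\<close>.\<close>
lemma pair_quadratic_form_neg_if_nonsymmetric:
  fixes S :: "real^'m^'m"
  assumes "S \<noteq> transpose S"
  shows "\<exists>a1 a2. a1 \<in> cball 0 1 \<and> a2 \<in> cball 0 1 \<and> pair_quadratic_form S a1 a2 < 0"
proof -
  obtain p q where "S$p$q \<noteq> S$q$p"
    using assms by (auto simp: vec_eq_iff transpose_def)
  define d where "d = S$p$q - S$q$p"
  define c :: real where "c = (if d > 0 then -1 else 1)"
  define s where "s = \<bar>d\<bar> / (\<bar>d\<bar> + \<bar>S$p$p\<bar>)"
  have d: "\<bar>d\<bar> > 0" and c: "c * d = - \<bar>d\<bar>" "\<bar>c\<bar> = 1"
    using \<open>S$p$q \<noteq> S$q$p\<close> unfolding d_def c_def by auto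
  have s: "0 < s" "s \<le> 1" "s * \<bar>S$p$p\<bar> < \<bar>d\<bar>"
    using d unfolding s_def by (auto simp: divide_less_eq mult_strict_left_mono)
  define a where "a = (c / 2) *\<^sub>R axis q (1::real)"
  define w where "w = (s / 2) *\<^sub>R axis p (1::real)"
  have "pair_quadratic_form S a (w - a) = s * (s * S$p$p + c * d) / 4"
    unfolding pair_quadratic_form_shift a_def w_def d_def
    by (simp add: inner_matrix_vector_mult_axis algebra_simps power2_eq_square)
  also have "\<dots> < 0"
  proof -
    have "s * S$p$p \<le> s * \<bar>S$p$p\<bar>" using s by (intro mult_left_mono) auto
    then have "s * S$p$p + c * d < 0" using s c by linarith
    then show ?thesis using s by (simp add: mult_pos_neg)
  qed
  finally have "pair_quadratic_form S a (w - a) < 0" .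
  moreover have "a \<in> cball 0 1" unfolding a_def using c by simp
  moreover have "w - a \<in> cball 0 1"
  proof -
    have "norm (w - a) \<le> norm w + norm a" by (rule norm_triangle_ineq4)
    also have "\<dots> \<le> 1" unfolding w_def a_def using s c by simp
    finally show ?thesis by simp
  qed
  ultimately show ?thesis by blast
qed

section \<open>Differential calculus of \<open>C\<^sup>k\<close> functions\<close>

lemma Ck_imp_continuous_on: "Ck k f \<Longrightarrow> continuous_on UNIV f"
  by (cases k)
     (auto intro: differentiable_imp_continuous_on differentiable_at_imp_differentiable_on)

lemma Ck_Suc_has_derivative: "Ck (Suc k) f \<Longrightarrow> (f has_derivative frechet_derivative f (at x)) (at x)"
  using frechet_derivative_works by auto

lemma Ck_Suc_imp_Ck: "Ck (Suc k) f \<Longrightarrow> Ck k f"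
proof (induction k arbitrary: f)
  case 0
  then show ?case
    by (auto intro: differentiable_imp_continuous_on differentiable_at_imp_differentiable_on)
next
  case (Suc k)
  then show ?case by (metis Ck.simps(2))
qed

lemma frechet_derivative_eqI:
  "(\<And>x. (f has_derivative D x) (at x)) \<Longrightarrow> (\<lambda>x. frechet_derivative f (at x) v) = (\<lambda>x. D x v)"
  using frechet_derivative_at by metis

lemma Ck_const: "Ck k (\<lambda>x::'a::real_normed_vector. c)"
proof (induction k arbitrary: c)
  case (Suc k)
  have "(\<lambda>x. frechet_derivative (\<lambda>x. c) (at x) v) = (\<lambda>x. 0)" for v :: 'a
    by (rule frechet_derivative_eqI) (rule has_derivative_const)
  with Suc show ?case by simp
qed simp

lemma Ck_add: "Ck k f \<Longrightarrow> Ck k g \<Longrightarrow> Ck k (\<lambda>x. f x + g x)"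
proof (induction k arbitrary: f g)
  case 0
  then show ?case by (simp add: continuous_on_add)
next
  case (Suc k)
  have "(\<lambda>x. frechet_derivative (\<lambda>x. f x + g x) (at x) v)
      = (\<lambda>x. frechet_derivative f (at x) v + frechet_derivative g (at x) v)" for v
    by (rule frechet_derivative_eqI)
       (intro has_derivative_add Ck_Suc_has_derivative[OF Suc.prems(1)]
          Ck_Suc_has_derivative[OF Suc.prems(2)])
  with Suc show ?case by auto
qed

lemma Ck_sum: "finite A \<Longrightarrow> (\<And>i. i \<in> A \<Longrightarrow> Ck k (f i)) \<Longrightarrow> Ck k (\<lambda>x. \<Sum>i\<in>A. f i x)"
  by (induction A rule: finite_induct) (auto intro: Ck_const Ck_add)

lemma Ck_mult:
  fixes f g :: "'a::real_normed_vector \<Rightarrow> 'b::real_normed_algebra"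
  shows "Ck k f \<Longrightarrow> Ck k g \<Longrightarrow> Ck k (\<lambda>x. f x * g x)"
proof (induction k arbitrary: f g)
  case 0
  then show ?case by (simp add: continuous_on_mult)
next
  case (Suc k)
  have "(\<lambda>x. frechet_derivative (\<lambda>x. f x * g x) (at x) v)
      = (\<lambda>x. f x * frechet_derivative g (at x) v + frechet_derivative f (at x) v * g x)" for v
    by (rule frechet_derivative_eqI)
       (intro has_derivative_mult Ck_Suc_has_derivative[OF Suc.prems(1)]
          Ck_Suc_has_derivative[OF Suc.prems(2)])
  moreover have
    "Ck k (\<lambda>x. f x * frechet_derivative g (at x) v + frechet_derivative f (at x) v * g x)" for v
    using Suc.prems by (intro Ck_add Suc.IH Ck_Suc_imp_Ck[of k f] Ck_Suc_imp_Ck[of k g]) auto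
  ultimately show ?case using Suc.prems by auto
qed

lemma Ck_bounded_linear_compose: "bounded_linear l \<Longrightarrow> Ck k f \<Longrightarrow> Ck k (\<lambda>x. l (f x))"
proof (induction k arbitrary: f)
  case 0
  then show ?case by (auto intro: continuous_on_compose2[OF linear_continuous_on])
next
  case (Suc k)
  have D: "((\<lambda>x. l (f x)) has_derivative (\<lambda>v. l (frechet_derivative f (at x) v))) (at x)" for x
    by (rule bounded_linear.has_derivative[OF Suc.prems(1) Ck_Suc_has_derivative[OF Suc.prems(2)]])
  then have "(\<lambda>x. frechet_derivative (\<lambda>x. l (f x)) (at x) v)
      = (\<lambda>x. l (frechet_derivative f (at x) v))" for v
    by (rule frechet_derivative_eqI)
  with Suc D show ?case by (auto simp: differentiable_def)
qed

lemma linear_euclidean_expansion: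
  fixes D :: "'a::euclidean_space \<Rightarrow> 'b::real_vector"
  assumes "linear D"
  shows "D w = (\<Sum>i\<in>Basis. (w \<bullet> i) *\<^sub>R D i)"
proof -
  have "D w = D (\<Sum>i\<in>Basis. (w \<bullet> i) *\<^sub>R i)" by (simp add: euclidean_representation)
  also have "\<dots> = (\<Sum>i\<in>Basis. (w \<bullet> i) *\<^sub>R D i)"
    using assms by (simp add: linear_sum linear_scale)
  finally show ?thesis .
qed

lemma Ck_Suc_frechet_derivative_continuous_on:
  fixes f :: "'a::euclidean_space \<Rightarrow> 'b::real_normed_vector"
  assumes f: "Ck (Suc k) f" and g: "continuous_on UNIV g"
  shows "continuous_on UNIV (\<lambda>z. frechet_derivative f (at z) (g z))"
proof -
  have "frechet_derivative f (at z) (g z)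
      = (\<Sum>i\<in>Basis. (g z \<bullet> i) *\<^sub>R frechet_derivative f (at z) i)" for z
    using linear_euclidean_expansion has_derivative_linear[OF Ck_Suc_has_derivative[OF f]] by blast
  moreover have "continuous_on UNIV (\<lambda>z. \<Sum>i\<in>Basis. (g z \<bullet> i) *\<^sub>R frechet_derivative f (at z) i)"
    using f by (intro continuous_intros g Ck_imp_continuous_on[of k]) auto
  ultimately show ?thesis by simp
qed

lemma frechet_derivative_eq_grad_inner:
  fixes f :: "real^'n \<Rightarrow> real"
  assumes "f differentiable (at z)"
  shows "frechet_derivative f (at z) w = grad f z \<bullet> w"
proof -
  have lin: "linear (frechet_derivative f (at z))"
    using assms frechet_derivative_works has_derivative_linear by blast
  have "frechet_derivative f (at z) w = frechet_derivative f (at z) (\<Sum>i\<in>UNIV. w$i *\<^sub>R axis i 1)"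
    using basis_expansion[of w] by (simp add: scalar_mult_eq_scaleR)
  also have "\<dots> = grad f z \<bullet> w"
    using lin by (simp add: linear_sum linear_scale grad_def inner_vec_def mult.commute)
  finally show ?thesis .
qed

lemma gradu_sigma_inner: "gradu_sigma u \<sigma> z \<bullet> c = grad u z \<bullet> (\<sigma> z *v c)"
  unfolding gradu_sigma_def by (rule dot_lmul_matrix)

lemma bounded_linear_matrix_vector_mult_left: "bounded_linear (\<lambda>A::real^'n^'m. A *v c)"
  by (simp add: linear_conv_bounded_linear[symmetric] linear_iff matrix_vector_mult_add_rdistrib
      scaleR_matrix_vector_assoc)

lemma Ck_gradu_sigma_inner:
  assumes "Ck k \<sigma>" and "Ck (Suc k) u"
  shows "Ck k (\<lambda>z. gradu_sigma u \<sigma> z \<bullet> b)"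
proof -
  have "gradu_sigma u \<sigma> z \<bullet> b
      = (\<Sum>i\<in>UNIV. frechet_derivative u (at z) (axis i 1) * (\<sigma> z *v b) $ i)" for z
    unfolding gradu_sigma_inner unfolding grad_def inner_vec_def by simp
  moreover have "Ck k (\<lambda>z. \<Sum>i\<in>UNIV. frechet_derivative u (at z) (axis i 1) * (\<sigma> z *v b) $ i)"
  proof (intro Ck_sum Ck_mult)
    fix i
    show "Ck k (\<lambda>z. frechet_derivative u (at z) (axis i 1))" using assms(2) by simp
    show "Ck k (\<lambda>z. (\<sigma> z *v b) $ i)"
      by (rule Ck_bounded_linear_compose[OF _ assms(1)])
         (rule bounded_linear_compose[OF bounded_linear_vec_nth
            bounded_linear_matrix_vector_mult_left])
  qed simp
  ultimately show ?thesis by simp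
qed

lemma Smat_inner_eq_frechet_derivative:
  assumes diff: "\<And>j. (\<lambda>z. gradu_sigma u \<sigma> z $ j) differentiable (at z)"
  shows "(Smat u \<sigma> z *v b) \<bullet> c =
    frechet_derivative (\<lambda>z. gradu_sigma u \<sigma> z \<bullet> b) (at z) (\<sigma> z *v c)"
proof -
  define D where "D j = frechet_derivative (\<lambda>z. gradu_sigma u \<sigma> z $ j) (at z)" for j
  have hasD: "((\<lambda>z. gradu_sigma u \<sigma> z $ j) has_derivative D j) (at z)" for j
    unfolding D_def using diff frechet_derivative_works by blast
  have S: "Smat u \<sigma> z $ i $ j = D j (column i (\<sigma> z))" for i j
    unfolding Smat_def D_def by (simp add: frechet_derivative_eq_grad_inner[OF diff])
  have "(Smat u \<sigma> z *v b) \<bullet> c = (\<Sum>j\<in>UNIV. b$j * (\<Sum>i\<in>UNIV. c$i * D j (column i (\<sigma> z))))"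
    unfolding inner_vec_def matrix_vector_mult_def S
    by (simp add: sum_distrib_left sum_distrib_right mult_ac) (subst sum.swap, simp add: mult_ac)
  also have "\<dots> = (\<Sum>j\<in>UNIV. b$j * D j (\<sigma> z *v c))"
    using has_derivative_linear[OF hasD]
    by (simp add: matrix_mult_sum scalar_mult_eq_scaleR linear_sum linear_scale)
  also have "\<dots> = frechet_derivative (\<lambda>z. gradu_sigma u \<sigma> z \<bullet> b) (at z) (\<sigma> z *v c)"
  proof -
    have "((\<lambda>z. gradu_sigma u \<sigma> z \<bullet> b) has_derivative (\<lambda>w. \<Sum>j\<in>UNIV. D j w * b$j)) (at z)"
      unfolding inner_vec_def by (simp, intro has_derivative_sum has_derivative_mult_left hasD)
    then show ?thesis by (simp add: frechet_derivative_at[symmetric] mult.commute)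
  qed
  finally show ?thesis .
qed

lemma norm_matrix_vector_mult_le:
  fixes A :: "real^'n^'m"
  shows "norm (A *v x) \<le> norm A * norm x"
proof -
  have "(norm (A *v x))^2 = (\<Sum>i\<in>UNIV. (A$i \<bullet> x)^2)"
    unfolding power2_norm_eq_inner matrix_mult_dot inner_vec_def by (simp add: power2_eq_square)
  also have "\<dots> \<le> (\<Sum>i\<in>UNIV. (norm (A$i))^2 * (norm x)^2)"
  proof (rule sum_mono)
    fix i
    have "\<bar>A$i \<bullet> x\<bar> \<le> norm (A$i) * norm x" by (rule Cauchy_Schwarz_ineq2)
    from power_mono[OF this abs_ge_zero, of 2] show "(A$i \<bullet> x)^2 \<le> (norm (A$i))^2 * (norm x)^2"
      by (simp add: power_mult_distrib)
  qed
  also have "\<dots> = (norm A * norm x)^2"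
    by (simp add: power2_norm_eq_inner[of A] inner_vec_def power_mult_distrib sum_distrib_right
        power2_norm_eq_inner)
  finally show ?thesis by (rule power2_le_imp_le) simp
qed

lemma lipschitz_on_matrix_vector_mult:
  assumes "L-lipschitz_on S (\<sigma> :: 'a::metric_space \<Rightarrow> real^'m^'n)" and "norm a \<le> 1"
  shows "L-lipschitz_on S (\<lambda>z. \<sigma> z *v a)"
proof (rule lipschitz_onI)
  fix z z' assume "z \<in> S" "z' \<in> S"
  have "dist (\<sigma> z *v a) (\<sigma> z' *v a) \<le> dist (\<sigma> z) (\<sigma> z') * norm a"
    using norm_matrix_vector_mult_le[of "\<sigma> z - \<sigma> z'" a]
    by (simp add: dist_norm matrix_vector_mult_diff_rdistrib)
  also have "\<dots> \<le> dist (\<sigma> z) (\<sigma> z')" using assms(2) by (simp add: mult_left_le)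
  also have "\<dots> \<le> L * dist z z'" using lipschitz_onD[OF assms(1)] \<open>z \<in> S\<close> \<open>z' \<in> S\<close> .
  finally show "dist (\<sigma> z *v a) (\<sigma> z' *v a) \<le> L * dist z z'" .
qed (rule lipschitz_on_nonneg[OF assms(1)])

lemma onorm_le_sum_Basis:
  fixes D :: "'a::euclidean_space \<Rightarrow> 'b::real_normed_vector"
  assumes "linear D"
  shows "onorm D \<le> (\<Sum>i\<in>Basis. norm (D i))"
proof -
  have bl: "bounded_linear D" using assms by (rule linear_conv_bounded_linear[THEN iffD1])
  have "onorm D = norm (Blinfun D)"
    by (simp add: norm_blinfun.rep_eq bounded_linear_Blinfun_apply[OF bl])
  also have "\<dots> \<le> (\<Sum>i\<in>Basis. norm (D i))"
    using norm_blinfun_euclidean_le[of "Blinfun D"]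
    by (simp add: bounded_linear_Blinfun_apply[OF bl])
  finally show ?thesis .
qed

lemma bounded_on_cball_if_continuous:
  fixes g :: "'a::euclidean_space \<Rightarrow> 'b::real_normed_vector"
  assumes "continuous_on UNIV g"
  obtains B where "0 \<le> B" and "\<forall>z\<in>cball c r. norm (g z) \<le> B"
proof -
  have "bounded (g ` cball c r)"
    by (rule compact_imp_bounded[OF compact_continuous_image[OF continuous_on_subset[OF assms]
          compact_cball]]) simp
  then obtain B where "B > 0" "\<forall>y\<in>g ` cball c r. norm y \<le> B" by (auto simp: bounded_pos)
  then show ?thesis by (intro that[of B]) auto
qed

lemma Ck_Suc_lipschitz_on_cball:
  fixes f :: "'a::euclidean_space \<Rightarrow> 'b::real_normed_vector"
  assumes f: "Ck (Suc k) f"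
  obtains L where "L-lipschitz_on (cball c r) f"
proof -
  have "continuous_on UNIV (\<lambda>z. \<Sum>i\<in>Basis. norm (frechet_derivative f (at z) i))"
    using f by (intro continuous_intros Ck_imp_continuous_on[of k]) auto
  then obtain B where B0: "0 \<le> B"
    and Bn: "\<forall>z\<in>cball c r. norm (\<Sum>i\<in>Basis. norm (frechet_derivative f (at z) i)) \<le> B"
    by (rule bounded_on_cball_if_continuous)
  have B: "(\<Sum>i\<in>Basis. norm (frechet_derivative f (at z) i)) \<le> B" if "z \<in> cball c r" for z
    using Bn that by (simp add: abs_le_iff)
  have "norm (f z - f z') \<le> B * norm (z - z')" if "z \<in> cball c r" "z' \<in> cball c r" for z z'
  proof (rule differentiable_bound[OF convex_cball _ _ that,
        where f' = "\<lambda>x. frechet_derivative f (at x)"])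
    show "(f has_derivative frechet_derivative f (at x)) (at x within cball c r)" for x
      using Ck_Suc_has_derivative[OF f] by (rule has_derivative_at_withinI)
    show "onorm (frechet_derivative f (at x)) \<le> B" if "x \<in> cball c r" for x
      using B[OF that]
        onorm_le_sum_Basis[OF has_derivative_linear[OF Ck_Suc_has_derivative[OF f, of x]]]
      by linarith
  qed
  then have "B-lipschitz_on (cball c r) f"
    using B0 by (intro lipschitz_onI) (simp_all add: dist_norm)
  then show ?thesis by (rule that)
qed

section \<open>Controlled trajectories\<close>

text \<open>Picard iteration on \<open>[t\<^sub>0, t\<^sub>0 + T]\<close>, realised on bounded continuous functions through
  clamping, is a contraction with constant \<open>T L\<close>.\<close>
lemma picard_lindelof_short_time:
  fixes G :: "'a::euclidean_space \<Rightarrow> 'a"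
  assumes lip: "L-lipschitz_on UNIV G" and T: "0 < T" "T * L < 1"
  shows "\<exists>x. continuous_on {t0..t0+T} x \<and>
    (\<forall>s\<in>{t0..t0+T}. x s = y + integral {t0..s} (\<lambda>r. G (x r)))"
proof -
  define I where "I = {t0..t0+T}"
  have L: "0 \<le> L" using lipschitz_on_nonneg[OF lip] .
  have contG: "continuous_on A (\<lambda>r. G (apply_bcontfun g r))" for A and g :: "real \<Rightarrow>\<^sub>C 'a"
    by (rule continuous_on_compose2[OF lipschitz_on_continuous_on[OF lip]
          continuous_on_apply_bcontfun]) auto
  have intG: "(\<lambda>r. G (apply_bcontfun g r)) integrable_on {a..b}" for a b and g :: "real \<Rightarrow>\<^sub>C 'a"
    by (rule integrable_continuous_real[OF contG])
  define \<Phi> where "\<Phi> g t = y + integral {t0..t} (\<lambda>r. G (g r))" for g :: "real \<Rightarrow>\<^sub>C 'a" and t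
  have "continuous_on I (\<Phi> g)" for g
    unfolding \<Phi>_def I_def by (intro continuous_intros indefinite_integral_continuous_1 intG)
  then have "\<exists>h :: real \<Rightarrow>\<^sub>C 'a. \<forall>t. h t = \<Phi> g (clamp t0 (t0+T) t)" for g
    using continuous_on_cbox_bcontfunE[of t0 "t0+T" "\<Phi> g"] unfolding I_def by (metis cbox_interval)
  then obtain P :: "(real \<Rightarrow>\<^sub>C 'a) \<Rightarrow> (real \<Rightarrow>\<^sub>C 'a)"
    where P: "\<And>g t. P g t = \<Phi> g (clamp t0 (t0+T) t)"
    by metis
  have clamp_I: "clamp t0 (t0+T) t \<in> I" for t
    using clamp_in_interval[of t0 "t0+T" t] T unfolding I_def by simp
  have "dist (P g) (P g') \<le> (T * L) * dist g g'" for g g'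
  proof (rule dist_bound)
    fix t
    define s where "s = clamp t0 (t0+T) t"
    have s: "t0 \<le> s" "s \<le> t0 + T" using clamp_I[of t] unfolding s_def I_def by auto
    have "dist (P g t) (P g' t) = norm (integral {t0..s} (\<lambda>r. G (g r) - G (g' r)))"
      unfolding P s_def[symmetric] \<Phi>_def dist_norm
      by (simp add: integral_diff[OF intG intG])
    also have "\<dots> \<le> L * dist g g' * measure lborel {t0..s}"
    proof (rule has_integral_bound_real[where S="{}"])
      show "((\<lambda>r. G (g r) - G (g' r)) has_integral
          integral {t0..s} (\<lambda>r. G (g r) - G (g' r))) {t0..s}"
        using integrable_diff[OF intG intG] by (simp add: has_integral_integral)
      fix r
      have "norm (G (g r) - G (g' r)) \<le> L * dist (g r) (g' r)"
        using lipschitz_on_normD[OF lip] by (simp add: dist_norm)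
      also have "\<dots> \<le> L * dist g g'" using dist_bounded L by (intro mult_left_mono)
      finally show "norm (G (g r) - G (g' r)) \<le> L * dist g g'" .
    qed (use L in simp_all)
    also have "\<dots> \<le> L * dist g g' * T" using s L by (simp add: mult_left_mono)
    finally show "dist (P g t) (P g' t) \<le> (T * L) * dist g g'" by (simp add: mult_ac)
  qed
  then obtain g where "P g = g"
    using banach_fix_type[of "T * L" P] T L by auto
  then have "g s = \<Phi> g s" if "s \<in> I" for s
    using P[of g s] that unfolding I_def by simp
  then show ?thesis unfolding \<Phi>_def I_def by (intro exI[of _ "apply_bcontfun g"]) auto
qed

lemma lipschitz_extension_closest_point:
  fixes F :: "'a::euclidean_space \<Rightarrow> 'b::metric_space"
  assumes lip: "L-lipschitz_on C F" and C: "convex C" "closed C" "C \<noteq> {}"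
  obtains G where "L-lipschitz_on UNIV G" and "\<And>z. z \<in> C \<Longrightarrow> G z = F z"
    and "\<And>z. \<exists>w\<in>C. G z = F w"
proof
  have "1-lipschitz_on UNIV (closest_point C)"
    by (rule lipschitz_onI) (auto intro: closest_point_lipschitz[OF C])
  from lipschitz_on_compose2[OF this lipschitz_on_subset[OF lip]]
  show "L-lipschitz_on UNIV (\<lambda>z. F (closest_point C z))"
    using closest_point_in_set[OF C(2,3)] by auto
  show "F (closest_point C z) = F z" if "z \<in> C" for z
    using that by (simp add: closest_point_self)
  show "\<exists>w\<in>C. F (closest_point C z) = F w" for z
    using closest_point_in_set[OF C(2,3)] by blast
qed

text \<open>The a priori bound \<open>dist (x s) y \<le> M (s - a)\<close> keeps the solution of the globally
  Lipschitz extension of \<open>F\<close> inside the ball, where it solves the original equation.\<close>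
lemma local_ode_solution:
  fixes F :: "'a::euclidean_space \<Rightarrow> 'a"
  assumes lip: "L-lipschitz_on (cball c R) F"
    and bnd: "\<And>z. z \<in> cball c R \<Longrightarrow> norm (F z) \<le> M" and M: "0 \<le> M"
    and T: "0 < T" "T * L < 1" and yR: "dist y c + T * M \<le> R"
  shows "\<exists>x. x a = y \<and> continuous_on {a..a+T} x \<and>
     (\<forall>s\<in>{a..a+T}. dist (x s) y \<le> M * (s - a) \<and> ((\<lambda>r. F (x r)) has_integral (x s - y)) {a..s}) \<and>
     (\<forall>s\<in>{a<..<a+T}. (x has_vector_derivative F (x s)) (at s))"
proof -
  define C where "C = cball c R"
  define I where "I = {a..a+T}"
  have "c \<in> C" using yR T M unfolding C_def by (simp add: order_trans[OF _ yR])
  then have "convex C" "closed C" "C \<noteq> {}" unfolding C_def by auto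
  then obtain G where G: "L-lipschitz_on UNIV G" and GF: "\<And>z. z \<in> C \<Longrightarrow> G z = F z"
    and G_range: "\<And>z. \<exists>w\<in>C. G z = F w"
    using lipschitz_extension_closest_point[of L C F] lip unfolding C_def by blast
  have G_bnd: "norm (G z) \<le> M" for z
    using G_range[of z] bnd unfolding C_def by auto
  then obtain x where cont: "continuous_on I x"
    and x: "\<And>s. s \<in> I \<Longrightarrow> x s = y + integral {a..s} (\<lambda>r. G (x r))"
    using picard_lindelof_short_time[OF G T, of a y] unfolding I_def by auto
  have contG: "continuous_on I (\<lambda>r. G (x r))"
    using lipschitz_on_continuous_on[OF G] by (rule continuous_on_compose2[OF _ cont]) auto
  have int: "((\<lambda>r. G (x r)) has_integral (x s - y)) {a..s}" if "s \<in> I" for s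
    using x[OF that] integrable_continuous_real[OF continuous_on_subset[OF contG]] that
    by (simp add: has_integral_integral I_def)
  have dist_x: "dist (x s) y \<le> M * (s - a)" if "s \<in> I" for s
    using has_integral_bound_real[OF M _ int[OF that], of "{}"] G_bnd that
    by (auto simp: I_def dist_norm)
  have x_C: "x s \<in> C" if "s \<in> I" for s
  proof -
    have "M * (s - a) \<le> M * T" using that M unfolding I_def by (intro mult_left_mono) auto
    then show ?thesis
      using dist_x[OF that] yR dist_triangle[of c "x s" y] unfolding C_def
      by (simp add: dist_commute mult.commute)
  qed
  have GF_x: "G (x s) = F (x s)" if "s \<in> I" for s by (rule GF[OF x_C[OF that]])
  show ?thesis
  proof (intro exI conjI ballI)
    show "x a = y" using x[of a] T unfolding I_def by simp
    show "continuous_on {a..a+T} x" using cont unfolding I_def .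
    fix s assume "s \<in> {a..a+T}"
    then have s: "s \<in> I" unfolding I_def .
    show "dist (x s) y \<le> M * (s - a)" by (rule dist_x[OF s])
    show "((\<lambda>r. F (x r)) has_integral (x s - y)) {a..s}"
      using has_integral_cong[of "{a..s}" "\<lambda>r. G (x r)" "\<lambda>r. F (x r)"] int[OF s] GF_x s
      by (auto simp: I_def)
  next
    fix s assume s: "s \<in> {a<..<a+T}"
    then have "at s within I = at s" unfolding I_def by (intro at_within_Icc_at) auto
    moreover have "((\<lambda>r. y + integral {a..r} (\<lambda>r. G (x r))) has_vector_derivative G (x s))
        (at s within I)"
      using s contG unfolding I_def
      by (auto intro!: derivative_eq_intros integral_has_vector_derivative)
    ultimately show "(x has_vector_derivative F (x s)) (at s)"
      using has_vector_derivative_transform[of s I x] x GF_x s unfolding I_def by fastforce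
  qed
qed

lemma admissible_control_switch:
  assumes "a1 \<in> cball 0 1" and "a2 \<in> cball 0 1"
  shows "admissible_control (\<lambda>t. if t < h then a1 else a2)"
  unfolding admissible_control_def piecewise_continuous_nonneg_def
proof (intro conjI allI impI)
  let ?a = "\<lambda>t::real. if t < h then a1 else a2"
  fix T :: real
  have "continuous_on ({..<h} \<union> {h<..}) ?a"
  proof (rule continuous_on_open_Un)
    show "continuous_on {..<h} ?a" by (rule continuous_on_eq[OF continuous_on_const]) auto
    show "continuous_on {h<..} ?a" by (rule continuous_on_eq[OF continuous_on_const]) auto
  qed auto
  moreover have "{0..T} - {h} \<subseteq> {..<h} \<union> {h<..}" by auto
  ultimately have cont: "continuous_on ({0..T} - {h}) ?a" by (rule continuous_on_subset)
  have "(?a \<longlongrightarrow> a1) (at h within {0..T} \<inter> {..<h})" "(?a \<longlongrightarrow> a2) (at h within {0..T} \<inter> {h<..})"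
    by (auto intro!: tendsto_eventually simp: eventually_at_filter)
  with cont show "\<exists>D. finite D \<and> D \<subseteq> {0..T} \<and> continuous_on ({0..T} - D) ?a \<and>
      (\<forall>d\<in>D. (\<exists>l. (?a \<longlongrightarrow> l) (at d within {0..T} \<inter> {..<d})) \<and>
             (\<exists>l. (?a \<longlongrightarrow> l) (at d within {0..T} \<inter> {d<..})))"
    by (intro exI[of _ "{0..T} \<inter> {h}"]) (auto intro: continuous_on_subset)
qed (use assms in auto)

lemma trajectory_switch:
  assumes h: "0 \<le> h" and x12: "x2 h = x1 h"
    and c1: "continuous_on {0..h} x1" and c2: "continuous_on {h..2*h} x2"
    and i1: "\<And>s. s \<in> {0..h} \<Longrightarrow> ((\<lambda>r. \<sigma> (x1 r) *v a1) has_integral (x1 s - y)) {0..s}"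
    and i2: "\<And>s. s \<in> {h..2*h} \<Longrightarrow> ((\<lambda>r. \<sigma> (x2 r) *v a2) has_integral (x2 s - x1 h)) {h..s}"
    and y: "x1 0 = y"
  shows "trajectory \<sigma> (\<lambda>t. if t < h then a1 else a2) y (2*h) (\<lambda>t. if t \<le> h then x1 t else x2 t)"
  unfolding trajectory_def
proof (intro conjI ballI)
  let ?a = "\<lambda>t::real. if t < h then a1 else a2"
  let ?x = "\<lambda>t. if t \<le> h then x1 t else x2 t"
  show "?x 0 = y" using h y by simp
  show "continuous_on {0..2*h} ?x"
    by (rule continuous_on_cases_le[OF continuous_on_subset[OF c1] continuous_on_subset[OF c2]])
       (use x12 in auto)
  have first: "((\<lambda>r. \<sigma> (?x r) *v ?a r) has_integral (x1 s - y)) {0..s}" if "s \<in> {0..h}" for s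
    by (rule has_integral_spike_finite[OF finite.insertI[OF finite.emptyI] _ i1[OF that]])
       (use that in auto)
  fix s assume s: "s \<in> {0..2*h}"
  show "((\<lambda>r. \<sigma> (?x r) *v ?a r) has_integral (?x s - y)) {0..s}"
  proof (cases "s \<le> h")
    case True
    then show ?thesis using first[of s] s by simp
  next
    case False
    have "\<sigma> (?x r) *v ?a r = \<sigma> (x2 r) *v a2" if "r \<in> {h..s}" for r
      using that x12 by auto
    then have "((\<lambda>r. \<sigma> (?x r) *v ?a r) has_integral (x2 s - x1 h)) {h..s}"
      using i2[of s] s False by (subst has_integral_cong) auto
    from has_integral_combine[OF _ _ first[of h] this] show ?thesis using h False by simp
  qed
qed

lemma constant_control_arc_exists:
  fixes \<sigma> :: "real^'n \<Rightarrow> real^'m^'n"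
  assumes lip: "L-lipschitz_on (cball c R) \<sigma>"
    and bnd: "\<forall>z\<in>cball c R. norm (\<sigma> z) \<le> M" and M: "0 \<le> M"
    and T: "0 < T" "T * L < 1" and y: "dist y c + T * M \<le> R" and b: "b \<in> cball 0 1"
  shows "\<exists>x. x a = y \<and> continuous_on {a..a+T} x \<and>
     (\<forall>s\<in>{a..a+T}. dist (x s) y \<le> M * (s - a) \<and>
        ((\<lambda>r. \<sigma> (x r) *v b) has_integral (x s - y)) {a..s}) \<and>
     (\<forall>s\<in>{a<..<a+T}. (x has_vector_derivative \<sigma> (x s) *v b) (at s))"
proof -
  have "L-lipschitz_on (cball c R) (\<lambda>z. \<sigma> z *v b)"
    using b by (intro lipschitz_on_matrix_vector_mult[OF lip]) auto
  moreover have "norm (\<sigma> z *v b) \<le> M" if "z \<in> cball c R" for z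
  proof -
    have "norm (\<sigma> z *v b) \<le> norm (\<sigma> z) * norm b" by (rule norm_matrix_vector_mult_le)
    also have "\<dots> \<le> M * 1" using that bnd M b by (intro mult_mono) auto
    finally show ?thesis by simp
  qed
  ultimately show ?thesis by (rule local_ode_solution[OF _ _ M T y])
qed

lemma switched_trajectory_exists:
  fixes \<sigma> :: "real^'n \<Rightarrow> real^'m^'n"
  assumes lip: "L-lipschitz_on (cball c R) \<sigma>"
    and bnd: "\<forall>z\<in>cball c R. norm (\<sigma> z) \<le> M" and M: "0 \<le> M"
    and h: "0 < h" "h * L < 1" and y: "dist y c + 2 * h * M \<le> R"
    and a1: "a1 \<in> cball 0 1" and a2: "a2 \<in> cball 0 1"
  obtains x where "trajectory \<sigma> (\<lambda>t. if t < h then a1 else a2) y (2*h) x"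
    and "\<And>s. s \<in> {0..2*h} \<Longrightarrow> x s \<in> cball c R"
    and "\<And>s. 0 < s \<Longrightarrow> s < h \<Longrightarrow> (x has_vector_derivative \<sigma> (x s) *v a1) (at s)"
    and "\<And>s. h < s \<Longrightarrow> s < 2*h \<Longrightarrow> (x has_vector_derivative \<sigma> (x s) *v a2) (at s)"
proof -
  have hM: "0 \<le> h * M" using h M by simp
  obtain x1 where x1: "x1 0 = y" "continuous_on {0..h} x1"
    and dist1: "\<And>s. s \<in> {0..h} \<Longrightarrow> dist (x1 s) y \<le> M * s"
    and int1: "\<And>s. s \<in> {0..h} \<Longrightarrow> ((\<lambda>r. \<sigma> (x1 r) *v a1) has_integral (x1 s - y)) {0..s}"
    and der1: "\<And>s. s \<in> {0<..<h} \<Longrightarrow> (x1 has_vector_derivative \<sigma> (x1 s) *v a1) (at s)"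
    using constant_control_arc_exists[OF lip bnd M h _ a1, where y=y and a=0] y hM by auto
  have near1: "dist (x1 s) c \<le> dist y c + h * M" if "s \<in> {0..h}" for s
    using dist1[OF that] mult_left_mono[of s h M] that M dist_triangle[of "x1 s" c y]
    by (auto simp: dist_commute mult.commute)
  obtain x2 where x2: "x2 h = x1 h" "continuous_on {h..h+h} x2"
    and dist2: "\<And>s. s \<in> {h..h+h} \<Longrightarrow> dist (x2 s) (x1 h) \<le> M * (s - h)"
    and int2: "\<And>s. s \<in> {h..h+h} \<Longrightarrow> ((\<lambda>r. \<sigma> (x2 r) *v a2) has_integral (x2 s - x1 h)) {h..s}"
    and der2: "\<And>s. s \<in> {h<..<h+h} \<Longrightarrow> (x2 has_vector_derivative \<sigma> (x2 s) *v a2) (at s)"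
    using constant_control_arc_exists[OF lip bnd M h _ a2, where y="x1 h" and a=h] near1[of h] y h
    by auto
  have hh: "h + h = 2 * h" by simp
  define x where "x t = (if t \<le> h then x1 t else x2 t)" for t
  show ?thesis
  proof
    show "trajectory \<sigma> (\<lambda>t. if t < h then a1 else a2) y (2*h) x"
      unfolding x_def using x1 x2 int1 int2 h unfolding hh by (intro trajectory_switch) auto
    fix s
    show "x s \<in> cball c R" if "s \<in> {0..2*h}"
    proof (cases "s \<le> h")
      case True
      then show ?thesis using near1[of s] that y hM by (simp add: x_def dist_commute)
    next
      case False
      have "M * (s - h) \<le> M * h" using that M by (intro mult_left_mono) auto
      then show ?thesis
        using False that dist2[of s] near1[of h] y h dist_triangle[of "x2 s" c "x1 h"]
        by (simp add: x_def dist_commute mult.commute)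
    qed
    show "(x has_vector_derivative \<sigma> (x s) *v a1) (at s)" if "0 < s" "s < h"
      using has_vector_derivative_transform_within_open[OF der1, of s "{0<..<h}" x] that
      by (simp add: x_def)
    show "(x has_vector_derivative \<sigma> (x s) *v a2) (at s)" if "h < s" "s < 2*h"
      using has_vector_derivative_transform_within_open[OF der2, of s "{h<..<2*h}" x] that
      by (simp add: x_def)
  qed
qed

section \<open>Second-order decrease of \<open>u\<close>\<close>

lemma DERIV_upper_bound_increment:
  fixes g :: "real \<Rightarrow> real"
  assumes "a \<le> b" and "continuous_on {a..b} g"
    and "\<And>s. a < s \<Longrightarrow> s < b \<Longrightarrow> \<exists>d. (g has_real_derivative d) (at s) \<and> d \<le> K"
  shows "g b - g a \<le> K * (b - a)"
proof -
  have "K * a - g a \<le> K * b - g b"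
  proof (rule DERIV_nonneg_imp_increasing_open[OF assms(1)])
    fix s assume "a < s" "s < b"
    then obtain d where "(g has_real_derivative d) (at s)" "d \<le> K" using assms(3) by blast
    then show "\<exists>y. ((\<lambda>t. K * t - g t) has_real_derivative y) (at s) \<and> 0 \<le> y"
      by (intro exI[of _ "K - d"]) (auto intro!: derivative_eq_intros)
  qed (intro continuous_intros assms(2))
  then show ?thesis by (simp add: algebra_simps)
qed

lemma DERIV_taylor_upper_bound:
  fixes f g :: "real \<Rightarrow> real"
  assumes "a \<le> b" and f: "continuous_on {a..b} f" and g: "continuous_on {a..b} g"
    and f': "\<And>s. a < s \<Longrightarrow> s < b \<Longrightarrow> (f has_real_derivative g s) (at s)"
    and g': "\<And>s. a < s \<Longrightarrow> s < b \<Longrightarrow> \<exists>d. (g has_real_derivative d) (at s) \<and> d \<le> K"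
  shows "f b - f a \<le> (b - a) * g a + K * (b - a)^2 / 2"
proof -
  define \<phi> where "\<phi> t = f t - (t - a) * g a - K * (t - a)^2 / 2" for t
  have "\<phi> b - \<phi> a \<le> 0 * (b - a)"
  proof (rule DERIV_upper_bound_increment[OF assms(1)])
    show "continuous_on {a..b} \<phi>" unfolding \<phi>_def by (intro continuous_intros f) auto
    fix s assume s: "a < s" "s < b"
    have "g s - g a \<le> K * (s - a)"
      using s g' by (intro DERIV_upper_bound_increment continuous_on_subset[OF g]) auto
    moreover have "(\<phi> has_real_derivative g s - g a - K * (s - a)) (at s)"
      unfolding \<phi>_def using f'[OF s] by (auto intro!: derivative_eq_intros)
    ultimately show "\<exists>d. (\<phi> has_real_derivative d) (at s) \<and> d \<le> 0" by force
  qed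
  then show ?thesis unfolding \<phi>_def by simp
qed

text \<open>The mixed coefficient \<open>K21\<close> enters through the change of \<open>q2\<close> during the first phase,
  since the second phase starts from \<open>q2 h\<close> rather than \<open>q2 0\<close>.\<close>
lemma switched_second_order_bound:
  fixes p q1 q2 :: "real \<Rightarrow> real"
  assumes h: "0 \<le> h"
    and cont: "continuous_on {0..2*h} p" "continuous_on {0..2*h} q1" "continuous_on {0..2*h} q2"
    and p1: "\<And>s. 0 < s \<Longrightarrow> s < h \<Longrightarrow> (p has_real_derivative q1 s) (at s)"
    and p2: "\<And>s. h < s \<Longrightarrow> s < 2*h \<Longrightarrow> (p has_real_derivative q2 s) (at s)"
    and K11: "\<And>s. 0 < s \<Longrightarrow> s < h \<Longrightarrow> \<exists>d. (q1 has_real_derivative d) (at s) \<and> d \<le> K11"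
    and K21: "\<And>s. 0 < s \<Longrightarrow> s < h \<Longrightarrow> \<exists>d. (q2 has_real_derivative d) (at s) \<and> d \<le> K21"
    and K22: "\<And>s. h < s \<Longrightarrow> s < 2*h \<Longrightarrow> \<exists>d. (q2 has_real_derivative d) (at s) \<and> d \<le> K22"
  shows "p (2*h) - p 0 \<le> h * (q1 0 + q2 0) + h^2 * (K11/2 + K21 + K22/2)"
proof -
  have sub1: "{0..h} \<subseteq> {0..2*h}" and sub2: "{h..2*h} \<subseteq> {0..2*h}" using h by auto
  have "p h - p 0 \<le> h * q1 0 + K11 * h^2 / 2"
    using DERIV_taylor_upper_bound[OF h continuous_on_subset[OF cont(1) sub1]
        continuous_on_subset[OF cont(2) sub1] p1 K11] by simp
  moreover have "p (2*h) - p h \<le> h * q2 h + K22 * h^2 / 2"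
    using DERIV_taylor_upper_bound[of h "2*h", OF _ continuous_on_subset[OF cont(1) sub2]
        continuous_on_subset[OF cont(3) sub2] p2 K22] h by simp
  moreover have "h * q2 h \<le> h * q2 0 + K21 * h^2"
  proof -
    have "q2 h - q2 0 \<le> K21 * h"
      using DERIV_upper_bound_increment[OF h continuous_on_subset[OF cont(3) sub1] K21] by simp
    then show ?thesis
      using mult_left_mono[OF _ h] by (fastforce simp: power2_eq_square algebra_simps)
  qed
  ultimately show ?thesis by (simp add: algebra_simps power2_eq_square)
qed

lemma has_real_derivative_compose_vector:
  assumes f: "(f has_derivative f') (at (x s))" and x: "(x has_vector_derivative v) (at s)"
  shows "((\<lambda>t. f (x t)) has_real_derivative f' v) (at s)"
proof -
  have "((\<lambda>t. f (x t)) has_derivative (\<lambda>h. f' (h *\<^sub>R v))) (at s)"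
    using has_derivative_compose[OF x[unfolded has_vector_derivative_def] f] .
  moreover have "(\<lambda>h. f' (h *\<^sub>R v)) = (*) (f' v)"
    using has_derivative_linear[OF f] by (auto simp: linear_scale)
  ultimately show ?thesis by (simp add: has_field_derivative_def)
qed

lemma continuous_upper_bound_on_cball:
  fixes f :: "'a::metric_space \<Rightarrow> real"
  assumes "continuous_on UNIV f" and "0 < e"
  shows "\<exists>r>0. \<forall>z\<in>cball x r. f z \<le> f x + e"
proof -
  obtain d where "0 < d" and d: "\<And>z. dist z x < d \<Longrightarrow> dist (f z) (f x) < e"
    using assms unfolding continuous_on_iff by blast
  have "f z \<le> f x + e" if "z \<in> cball x (d / 2)" for z
  proof -
    have "dist z x < d" using that \<open>0 < d\<close> by (simp add: dist_commute)
    then show ?thesis using d[of z] by (simp add: dist_real_def abs_less_iff)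
  qed
  then show ?thesis using \<open>0 < d\<close> by (intro exI[of _ "d / 2"]) auto
qed

context
  fixes u :: "real^'n \<Rightarrow> real" and \<sigma> :: "real^'n \<Rightarrow> real^'m^'n"
  assumes \<sigma>: "Ck 1 \<sigma>" and u: "Ck 2 u"
begin

lemma Ck_1_gradu_sigma_inner: "Ck 1 (\<lambda>z. gradu_sigma u \<sigma> z \<bullet> b)"
  using Ck_gradu_sigma_inner[OF \<sigma>] u by (simp add: numeral_2_eq_2)

lemma differentiable_gradu_sigma_component: "(\<lambda>z. gradu_sigma u \<sigma> z $ j) differentiable (at z)"
proof -
  have "(\<lambda>z. gradu_sigma u \<sigma> z \<bullet> axis j 1) differentiable (at z)"
    using Ck_1_gradu_sigma_inner by (simp add: One_nat_def)
  then show ?thesis by (simp add: inner_axis)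
qed

lemma continuous_on_Smat_inner: "continuous_on UNIV (\<lambda>z. (Smat u \<sigma> z *v b) \<bullet> a)"
  unfolding Smat_inner_eq_frechet_derivative[OF differentiable_gradu_sigma_component]
proof (rule Ck_Suc_frechet_derivative_continuous_on)
  show "Ck (Suc 0) (\<lambda>z. gradu_sigma u \<sigma> z \<bullet> b)" using Ck_1_gradu_sigma_inner by simp
  show "continuous_on UNIV (\<lambda>z. \<sigma> z *v a)"
    using linear_continuous_on[OF bounded_linear_matrix_vector_mult_left]
    by (rule continuous_on_compose2[OF _ Ck_imp_continuous_on[OF \<sigma>]]) auto
qed

lemma has_real_derivative_u_along_trajectory:
  assumes "(x has_vector_derivative \<sigma> (x s) *v a) (at s)"
  shows "((\<lambda>t. u (x t)) has_real_derivative gradu_sigma u \<sigma> (x s) \<bullet> a) (at s)"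
proof -
  have diff: "u differentiable (at (x s))" using u by (simp add: numeral_2_eq_2)
  from has_real_derivative_compose_vector[OF diff[unfolded frechet_derivative_works] assms]
  show ?thesis by (simp add: gradu_sigma_inner frechet_derivative_eq_grad_inner[OF diff])
qed

lemma has_real_derivative_gradu_sigma_along_trajectory:
  assumes "(x has_vector_derivative \<sigma> (x s) *v a) (at s)"
  shows "((\<lambda>t. gradu_sigma u \<sigma> (x t) \<bullet> b) has_real_derivative (Smat u \<sigma> (x s) *v b) \<bullet> a) (at s)"
proof -
  have "Ck (Suc 0) (\<lambda>z. gradu_sigma u \<sigma> z \<bullet> b)" using Ck_1_gradu_sigma_inner by simp
  from has_real_derivative_compose_vector[OF Ck_Suc_has_derivative[OF this] assms] show ?thesis
    unfolding Smat_inner_eq_frechet_derivative[OF differentiable_gradu_sigma_component] .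
qed

lemma u_switched_path_estimate:
  assumes h: "0 \<le> h" and x: "continuous_on {0..2*h} x"
    and x1: "\<And>s. 0 < s \<Longrightarrow> s < h \<Longrightarrow> (x has_vector_derivative \<sigma> (x s) *v a1) (at s)"
    and x2: "\<And>s. h < s \<Longrightarrow> s < 2*h \<Longrightarrow> (x has_vector_derivative \<sigma> (x s) *v a2) (at s)"
    and K11: "\<And>s. 0 < s \<Longrightarrow> s < h \<Longrightarrow> (Smat u \<sigma> (x s) *v a1) \<bullet> a1 \<le> K11"
    and K21: "\<And>s. 0 < s \<Longrightarrow> s < h \<Longrightarrow> (Smat u \<sigma> (x s) *v a2) \<bullet> a1 \<le> K21"
    and K22: "\<And>s. h < s \<Longrightarrow> s < 2*h \<Longrightarrow> (Smat u \<sigma> (x s) *v a2) \<bullet> a2 \<le> K22"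
  shows "u (x (2*h)) - u (x 0)
    \<le> h * (gradu_sigma u \<sigma> (x 0) \<bullet> (a1 + a2)) + h^2 * (K11/2 + K21 + K22/2)"
proof -
  have cont: "continuous_on {0..2*h} (\<lambda>s. f (x s))"
    if "continuous_on UNIV f" for f :: "real^'n \<Rightarrow> real"
    by (rule continuous_on_compose2[OF that x]) auto
  have "u (x (2*h)) - u (x 0) \<le> h * (gradu_sigma u \<sigma> (x 0) \<bullet> a1 + gradu_sigma u \<sigma> (x 0) \<bullet> a2)
      + h^2 * (K11/2 + K21 + K22/2)"
  proof (rule switched_second_order_bound[OF h])
    show "continuous_on {0..2*h} (\<lambda>s. u (x s))" by (rule cont[OF Ck_imp_continuous_on[OF u]])
    show "continuous_on {0..2*h} (\<lambda>s. gradu_sigma u \<sigma> (x s) \<bullet> a1)"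
      and "continuous_on {0..2*h} (\<lambda>s. gradu_sigma u \<sigma> (x s) \<bullet> a2)"
      by (rule cont[OF Ck_imp_continuous_on[OF Ck_1_gradu_sigma_inner]])+
    fix s
    assume "0 < s" "s < h"
    then show "((\<lambda>s. u (x s)) has_real_derivative gradu_sigma u \<sigma> (x s) \<bullet> a1) (at s)"
      and "\<exists>d. ((\<lambda>s. gradu_sigma u \<sigma> (x s) \<bullet> a1) has_real_derivative d) (at s) \<and> d \<le> K11"
      and "\<exists>d. ((\<lambda>s. gradu_sigma u \<sigma> (x s) \<bullet> a2) has_real_derivative d) (at s) \<and> d \<le> K21"
      using x1 K11 K21 has_real_derivative_u_along_trajectory
        has_real_derivative_gradu_sigma_along_trajectory by blast+
  next
    fix s
    assume "h < s" "s < 2*h"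
    then show "((\<lambda>s. u (x s)) has_real_derivative gradu_sigma u \<sigma> (x s) \<bullet> a2) (at s)"
      and "\<exists>d. ((\<lambda>s. gradu_sigma u \<sigma> (x s) \<bullet> a2) has_real_derivative d) (at s) \<and> d \<le> K22"
      using x2 K22 has_real_derivative_u_along_trajectory
        has_real_derivative_gradu_sigma_along_trajectory by blast+
  qed
  then show ?thesis by (simp add: inner_add_right)
qed

lemma switched_control_lowers_u:
  assumes a1: "a1 \<in> cball 0 1" and a2: "a2 \<in> cball 0 1"
    and lip: "L-lipschitz_on (cball c R) \<sigma>"
    and bnd: "\<forall>z\<in>cball c R. norm (\<sigma> z) \<le> M" and M: "0 \<le> M"
    and K: "\<forall>z\<in>cball c R. (Smat u \<sigma> z *v a1) \<bullet> a1 \<le> K11 \<and>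
      (Smat u \<sigma> z *v a2) \<bullet> a1 \<le> K21 \<and> (Smat u \<sigma> z *v a2) \<bullet> a2 \<le> K22"
    and h: "0 < h" "h * L < 1" and y: "dist y c + 2 * h * M \<le> R"
  obtains a x where "admissible_control a" and "trajectory \<sigma> a y (2*h) x"
    and "u (x (2*h)) \<le> u y + h^2 * (K11/2 + K21 + K22/2)"
proof -
  define sg :: real where "sg = (if gradu_sigma u \<sigma> y \<bullet> (a1 + a2) \<le> 0 then 1 else -1)"
  have sg: "sg * sg = 1" "\<bar>sg\<bar> = 1" unfolding sg_def by auto
  have first: "h * (gradu_sigma u \<sigma> y \<bullet> (sg *\<^sub>R a1 + sg *\<^sub>R a2)) \<le> 0"
    using h(1) unfolding sg_def by (simp add: mult_nonneg_nonpos scaleR_add_right[symmetric])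
  have c: "sg *\<^sub>R a1 \<in> cball 0 1" "sg *\<^sub>R a2 \<in> cball 0 1" using a1 a2 sg by auto
  have K_sg: "(Smat u \<sigma> z *v (sg *\<^sub>R b)) \<bullet> (sg *\<^sub>R a) = (Smat u \<sigma> z *v b) \<bullet> a" for z a b
    by (simp add: matrix_vector_mult_scaleR mult.assoc[symmetric] sg(1))
  obtain x where traj: "trajectory \<sigma> (\<lambda>t. if t < h then sg *\<^sub>R a1 else sg *\<^sub>R a2) y (2*h) x"
    and ball: "\<And>s. s \<in> {0..2*h} \<Longrightarrow> x s \<in> cball c R"
    and x1: "\<And>s. 0 < s \<Longrightarrow> s < h \<Longrightarrow> (x has_vector_derivative \<sigma> (x s) *v (sg *\<^sub>R a1)) (at s)"
    and x2: "\<And>s. h < s \<Longrightarrow> s < 2*h \<Longrightarrow> (x has_vector_derivative \<sigma> (x s) *v (sg *\<^sub>R a2)) (at s)"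
    using switched_trajectory_exists[OF lip bnd M h y c] by blast
  have x0: "x 0 = y" and cont: "continuous_on {0..2*h} x"
    using traj unfolding trajectory_def by auto
  have K_x: "(Smat u \<sigma> (x s) *v (sg *\<^sub>R a1)) \<bullet> (sg *\<^sub>R a1) \<le> K11 \<and>
      (Smat u \<sigma> (x s) *v (sg *\<^sub>R a2)) \<bullet> (sg *\<^sub>R a1) \<le> K21 \<and>
      (Smat u \<sigma> (x s) *v (sg *\<^sub>R a2)) \<bullet> (sg *\<^sub>R a2) \<le> K22" if "0 < s" "s < 2*h" for s
    unfolding K_sg using K ball[of s] that by auto
  have "u (x (2*h)) - u (x 0) \<le> h * (gradu_sigma u \<sigma> (x 0) \<bullet> (sg *\<^sub>R a1 + sg *\<^sub>R a2))
      + h^2 * (K11/2 + K21 + K22/2)"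
    by (rule u_switched_path_estimate[OF _ cont x1 x2]) (use h K_x in auto)
  with first x0 have "u (x (2*h)) \<le> u y + h^2 * (K11/2 + K21 + K22/2)" by simp
  with admissible_control_switch[OF c] traj show ?thesis by (rule that)
qed

lemma Smat_inner_le_near:
  assumes "0 < e"
  obtains r where "0 < r" and "\<forall>z\<in>cball xbar r.
      (Smat u \<sigma> z *v a1) \<bullet> a1 \<le> (Smat u \<sigma> xbar *v a1) \<bullet> a1 + e \<and>
      (Smat u \<sigma> z *v a2) \<bullet> a1 \<le> (Smat u \<sigma> xbar *v a2) \<bullet> a1 + e \<and>
      (Smat u \<sigma> z *v a2) \<bullet> a2 \<le> (Smat u \<sigma> xbar *v a2) \<bullet> a2 + e"
proof -
  define H where "H z b a = (Smat u \<sigma> z *v b) \<bullet> a" for z b a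
  define \<phi> where "\<phi> z = max (H z a1 a1 - H xbar a1 a1)
    (max (H z a2 a1 - H xbar a2 a1) (H z a2 a2 - H xbar a2 a2))" for z
  have "continuous_on UNIV \<phi>"
    unfolding \<phi>_def H_def by (intro continuous_intros continuous_on_Smat_inner)
  moreover have "\<phi> xbar = 0" unfolding \<phi>_def by simp
  ultimately obtain r where r: "0 < r" and "\<forall>z\<in>cball xbar r. \<phi> z \<le> e"
    using continuous_upper_bound_on_cball[OF _ assms, of \<phi> xbar] by auto
  then have "\<forall>z\<in>cball xbar r. H z a1 a1 \<le> H xbar a1 a1 + e \<and> H z a2 a1 \<le> H xbar a2 a1 + e \<and>
      H z a2 a2 \<le> H xbar a2 a2 + e"
    by (auto simp: \<phi>_def algebra_simps)
  with r show ?thesis unfolding H_def by (rule that)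
qed

lemma STLA_sublevel_if_pair_quadratic_form_neg:
  assumes a1: "a1 \<in> cball 0 1" and a2: "a2 \<in> cball 0 1"
    and neg: "pair_quadratic_form (Smat u \<sigma> xbar) a2 a1 < 0"
  shows "STLA \<sigma> {x. u x \<le> u xbar} xbar"
proof -
  define k11 k21 k22 where "k11 = (Smat u \<sigma> xbar *v a1) \<bullet> a1"
    and "k21 = (Smat u \<sigma> xbar *v a2) \<bullet> a1" and "k22 = (Smat u \<sigma> xbar *v a2) \<bullet> a2"
  define e where "e = - pair_quadratic_form (Smat u \<sigma> xbar) a2 a1 / 8"
  have e: "0 < e" using neg unfolding e_def by simp
  obtain r where "0 < r" and K: "\<forall>z\<in>cball xbar r. (Smat u \<sigma> z *v a1) \<bullet> a1 \<le> k11 + e \<and>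
      (Smat u \<sigma> z *v a2) \<bullet> a1 \<le> k21 + e \<and> (Smat u \<sigma> z *v a2) \<bullet> a2 \<le> k22 + e"
    using Smat_inner_le_near[OF e, of xbar a1 a2] unfolding k11_def k21_def k22_def by blast
  obtain L where lip: "L-lipschitz_on (cball xbar r) \<sigma>"
    using Ck_Suc_lipschitz_on_cball[of 0 \<sigma>] \<sigma> by (auto simp: One_nat_def)
  obtain M where M: "0 \<le> M" and bnd: "\<forall>z\<in>cball xbar r. norm (\<sigma> z) \<le> M"
    by (rule bounded_on_cball_if_continuous[OF Ck_imp_continuous_on[OF \<sigma>]])
  have L: "0 \<le> L" using lipschitz_on_nonneg[OF lip] .
  show ?thesis unfolding STLA_def
  proof (intro allI impI)
    fix t :: real assume "0 < t"
    define h where "h = min (t / 4) (min (r / (4 * (M + 1))) (1 / (L + 1)))"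
    have h: "0 < h" "2 * h < t" "h * L < 1" "2 * h * M \<le> r / 2"
    proof -
      show "0 < h" "2 * h < t" unfolding h_def using \<open>0 < t\<close> \<open>0 < r\<close> M L by auto
      have "h \<le> 1 / (L + 1)" unfolding h_def by simp
      then have "h * (L + 1) \<le> 1" using L by (simp add: le_divide_eq)
      then show "h * L < 1" using \<open>0 < h\<close> by (simp add: algebra_simps)
      have "h \<le> r / (4 * (M + 1))" unfolding h_def by simp
      then have "h * (4 * (M + 1)) \<le> r" using M by (simp add: le_divide_eq)
      then show "2 * h * M \<le> r / 2" using \<open>0 < h\<close> by (simp add: algebra_simps)
    qed
    have "0 < e * h^2" using e h(1) by simp
    then obtain r' where "0 < r'" and u_near: "\<And>y. y \<in> cball xbar r' \<Longrightarrow> u y \<le> u xbar + e * h^2"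
      using continuous_upper_bound_on_cball[OF Ck_imp_continuous_on[OF u]] by blast
    show "\<exists>\<delta>>0. \<forall>y. dist y xbar < \<delta> \<longrightarrow> (\<exists>a x \<tau>. admissible_control a \<and> 0 \<le> \<tau> \<and> \<tau> < t \<and>
        trajectory \<sigma> a y \<tau> x \<and> x \<tau> \<in> {x. u x \<le> u xbar})"
    proof (intro exI[of _ "min r' (r / 2)"] conjI allI impI)
      show "0 < min r' (r / 2)" using \<open>0 < r'\<close> \<open>0 < r\<close> by simp
      fix y assume y: "dist y xbar < min r' (r / 2)"
      then have "dist y xbar + 2 * h * M \<le> r" using h(4) by linarith
      then obtain a x where "admissible_control a" "trajectory \<sigma> a y (2*h) x"
        and decrease: "u (x (2*h)) \<le> u y + h^2 * ((k11 + e)/2 + (k21 + e) + (k22 + e)/2)"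
        by (rule switched_control_lowers_u[OF a1 a2 lip bnd M K h(1,3)])
      moreover have "(k11 + e)/2 + (k21 + e) + (k22 + e)/2 = - 2 * e"
        unfolding e_def k11_def k21_def k22_def pair_quadratic_form_def by (simp add: field_simps)
      ultimately have "u (x (2*h)) \<le> u y - 2 * (e * h^2)" by (simp add: mult_ac)
      moreover have "u y \<le> u xbar + e * h^2" using y by (intro u_near) (simp add: dist_commute)
      ultimately show "\<exists>a x \<tau>. admissible_control a \<and> 0 \<le> \<tau> \<and> \<tau> < t \<and>
          trajectory \<sigma> a y \<tau> x \<and> x \<tau> \<in> {x. u x \<le> u xbar}"
        using \<open>admissible_control a\<close> \<open>trajectory \<sigma> a y (2*h) x\<close> h \<open>0 < e * h^2\<close>
        by (intro exI[of _ a] exI[of _ x] exI[of _ "2*h"]) auto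
    qed
  qed
qed

end

theorem theorem2:
  fixes \<sigma> :: "real^'n \<Rightarrow> real^'m^'n" and u :: "real^'n \<Rightarrow> real" and xbar :: "real^'n"
  assumes "Ck 2 \<sigma>" and "Ck 3 u"
    and "gradu_sigma u \<sigma> xbar = 0" and "grad u xbar \<noteq> 0"
    and "Smat u \<sigma> xbar \<noteq> transpose (Smat u \<sigma> xbar)
         \<or> (Smat u \<sigma> xbar = transpose (Smat u \<sigma> xbar) \<and> has_neg_eigenvalue (Smat u \<sigma> xbar))"
  shows "(\<exists>a1 a2. a1 \<in> cball 0 1 \<and> a2 \<in> cball 0 1 \<and>
            (Kmat u \<sigma> xbar *v stack a1 a2) \<bullet> stack a1 a2 < 0)
       \<and> has_neg_eigenvalue (Kmat u \<sigma> xbar)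
       \<and> STLA \<sigma> {x. u x \<le> u xbar} xbar"
proof -
  obtain a1 a2 where a1: "a1 \<in> cball 0 1" and a2: "a2 \<in> cball 0 1"
    and Q: "pair_quadratic_form (Smat u \<sigma> xbar) a1 a2 < 0"
    using assms(5) pair_quadratic_form_neg_if_nonsymmetric pair_quadratic_form_neg_if_neg_eigenvalue
    by blast
  then have K: "(Kmat u \<sigma> xbar *v stack a1 a2) \<bullet> stack a1 a2 < 0"
    by (simp add: Kmat_quadratic_form)
  have "Ck 1 \<sigma>" and "Ck 2 u"
    using Ck_Suc_imp_Ck[of 1 \<sigma>] Ck_Suc_imp_Ck[of 2 u] assms(1,2) by (simp_all add: numeral_eq_Suc)
  from STLA_sublevel_if_pair_quadratic_form_neg[OF this a2 a1 Q]
    has_neg_eigenvalue_if_quadratic_form_neg[OF transpose_Kmat K] a1 a2 K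
  show ?thesis by blast
qed

end
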